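(* Let $N\ge1$, let $\tilde\chi$ be a Dirichlet character modulo $N$ with associated character $\chi$ on $\Gamma_0^{(2)}(N)$, let $f\in S_2^k(\Gamma_0^{(2)}(N),\chi)$, and let $s$ be a symmetric positive definite $2\times2$ integral matrix with $l'=\det(s)$. Then for every $d\in(\mathbb{Z}/l'N\mathbb{Z})^\times$, \[\langle d\rangle\,\phi_s^*(f)=\chi(dI_2)\,\phi_s^*(f).\]
   Context: $\Gamma_0^{(2)}(N)=\{\begin{pmatrix}A&B\\C&D\end{pmatrix}\in \mathrm{Sp}_4(\mathbb{Z}) : C\equiv 0 \pmod N\}$. For $M=\begin{pmatrix}A&B\\C&D\end{pmatrix}$, $F|_kM(Z)=\det(CZ+D)^{-k}F((AZ+B)(CZ+D)^{-1})$ on the Siegel upper half space $\mathbb{H}_2$ of genus 2. The character is $\chi(M)=\tilde\chi(\det D)$, and more generally for an integral $2\times2$ matrix $D$ one writes $\chi(D)=\tilde\chi(\det D)$ (so $\chi(dI_2)=\tilde\chi(d^2)$, with $d$ reduced modulo $N$). $S_2^k(\Gamma_0^{(2)}(N),\chi)$ is the space of Siegel cusp forms $f$ of degree 2, weight $k$ with $f|_kM=\chi(M)f$ for all $M\in\Gamma_0^{(2)}(N)$. The restriction $\phi_s^*(f)(\tau)=f(s\tau)$ ($\tau$ in the upper half plane) is an elliptic cusp form of weight $2k$ on $\Gamma_1(Nl')$. For $g$ of weight $2k$ on $\Gamma_1(Nl')$ and $d\in(\mathbb{Z}/l'N\mathbb{Z})^\times$, the diamond operator is $\langle d\rangle g=g|_{2k}\alpha$,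 $(g|_{2k}\alpha)(\tau)=(c\tau+\delta)^{-2k}g(\alpha\tau)$, for any $\alpha=\begin{pmatrix}a&b\\c&\delta\end{pmatrix}\in\Gamma_0(Nl')$ with $\delta\equiv d\pmod{Nl'}$. *)

theory Defs
  imports "HOL-Analysis.Analysis"
begin

definition mat2 :: "'a \<Rightarrow> 'a \<Rightarrow> 'a \<Rightarrow> 'a \<Rightarrow> 'a^2^2" where
  "mat2 a b c d = (\<chi> i j. if i = 1 then (if j = 1 then a else b) else (if j = 1 then c else d))"

definition cmat :: "int^2^2 \<Rightarrow> complex^2^2" where
  "cmat A = (\<chi> i j. of_int (A$i$j))"

definition Im_mat :: "complex^2^2 \<Rightarrow> real^2^2" where
  "Im_mat Z = (\<chi> i j. Im (Z$i$j))"

definition pos_def_real :: "real^2^2 \<Rightarrow> bool" where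
  "pos_def_real Y \<longleftrightarrow> transpose Y = Y \<and> (\<forall>x::real^2. x \<noteq> 0 \<longrightarrow> 0 < x \<bullet> (Y *v x))"

definition siegel_H2 :: "(complex^2^2) set" where
  "siegel_H2 = {Z. transpose Z = Z \<and> pos_def_real (Im_mat Z)}"

text \<open>Sp_4(Z): M = (A B; C D) with M^T J M = J, written out in 2x2 blocks.\<close>
definition Sp4Z :: "((int^2^2) \<times> (int^2^2) \<times> (int^2^2) \<times> (int^2^2)) set" where
  "Sp4Z = {(A::int^2^2,B::int^2^2,C::int^2^2,D::int^2^2). transpose A ** C = transpose C ** A \<and>
                      transpose B ** D = transpose D ** B \<and>
                      transpose A ** D - transpose C ** B = (mat 1 :: int^2^2)}"

definition Gamma0_2 :: "int \<Rightarrow> ((int^2^2) \<times> (int^2^2) \<times> (int^2^2) \<times> (int^2^2)) set" where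
  "Gamma0_2 N = {(A,B,C,D). (A,B,C,D) \<in> Sp4Z \<and> (\<forall>i j. N dvd C$i$j)}"

definition slash2 :: "nat \<Rightarrow> (complex^2^2 \<Rightarrow> complex) \<Rightarrow>
    ((int^2^2) \<times> (int^2^2) \<times> (int^2^2) \<times> (int^2^2)) \<Rightarrow> complex^2^2 \<Rightarrow> complex" where
  "slash2 k F M Z = (case M of (A,B,C,D) \<Rightarrow>
     inverse (det (cmat C ** Z + cmat D)) ^ k *
     F ((cmat A ** Z + cmat B) ** matrix_inv (cmat C ** Z + cmat D)))"

definition dirichlet_char :: "int \<Rightarrow> (int \<Rightarrow> complex) \<Rightarrow> bool" where
  "dirichlet_char N chi \<longleftrightarrow> N \<ge> 1 \<and> chi 1 = 1 \<and>
     (\<forall>a b. chi (a * b) = chi a * chi b) \<and>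
     (\<forall>a. chi (a + N) = chi a) \<and>
     (\<forall>a. chi a \<noteq> 0 \<longleftrightarrow> coprime a N)"

text \<open>Holomorphy on H_2, in the coordinates Z = (z1 z2; z2 z3): continuous and
  holomorphic in each variable separately (equivalent to holomorphy by Osgood's lemma).\<close>
definition holo_H2 :: "(complex^2^2 \<Rightarrow> complex) \<Rightarrow> bool" where
  "holo_H2 F \<longleftrightarrow>
     continuous_on {(a,b,c). mat2 a b b c \<in> siegel_H2} (\<lambda>(a,b,c). F (mat2 a b b c)) \<and>
     (\<forall>a b c. mat2 a b b c \<in> siegel_H2 \<longrightarrow>
        (\<lambda>w. F (mat2 w b b c)) field_differentiable at a \<and>
        (\<lambda>w. F (mat2 a w w c)) field_differentiable at b \<and>
        (\<lambda>w. F (mat2 a b b w)) field_differentiable at c)"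

definition Phi_vanishes :: "(complex^2^2 \<Rightarrow> complex) \<Rightarrow> bool" where
  "Phi_vanishes F \<longleftrightarrow> (\<forall>z. Im z > 0 \<longrightarrow>
     ((\<lambda>t::real. F (mat2 z 0 0 (\<i> * of_real t))) \<longlongrightarrow> 0) at_top)"

definition siegel_cusp_forms :: "nat \<Rightarrow> int \<Rightarrow> (int \<Rightarrow> complex) \<Rightarrow> (complex^2^2 \<Rightarrow> complex) set" where
  "siegel_cusp_forms k N chi = {F. holo_H2 F \<and>
     (\<forall>M \<in> Gamma0_2 N. \<forall>Z \<in> siegel_H2.
        slash2 k F M Z = chi (det (snd (snd (snd M)))) * F Z) \<and>
     (\<forall>M \<in> Sp4Z. Phi_vanishes (slash2 k F M))}"

definition phi_restr :: "int^2^2 \<Rightarrow> (complex^2^2 \<Rightarrow> complex) \<Rightarrow> complex \<Rightarrow> complex" where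
  "phi_restr s F \<tau> = F ((\<chi> i j. \<tau> * of_int (s$i$j)))"

definition slash1 :: "nat \<Rightarrow> (complex \<Rightarrow> complex) \<Rightarrow> int \<times> int \<times> int \<times> int \<Rightarrow> complex \<Rightarrow> complex" where
  "slash1 w g \<alpha> \<tau> = (case \<alpha> of (a,b,c,\<delta>) \<Rightarrow>
     inverse (of_int c * \<tau> + of_int \<delta>) ^ w * g ((of_int a * \<tau> + of_int b) / (of_int c * \<tau> + of_int \<delta>)))"

definition Gamma0 :: "int \<Rightarrow> (int \<times> int \<times> int \<times> int) set" where
  "Gamma0 M = {(a,b,c,\<delta>). a * \<delta> - b * c = 1 \<and> M dvd c}"

text \<open>Diamond operator <d> g = g|_w alpha for any alpha in Gamma_0(M) with delta = d mod M;
  "diamond_eq w M d g h" says that <d> g = h on the upper half plane, for every such alpha.\<close>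
definition diamond_eq :: "nat \<Rightarrow> int \<Rightarrow> int \<Rightarrow> (complex \<Rightarrow> complex) \<Rightarrow> (complex \<Rightarrow> complex) \<Rightarrow> bool" where
  "diamond_eq w M d g h \<longleftrightarrow> (\<forall>a b c \<delta>. (a,b,c,\<delta>) \<in> Gamma0 M \<and> \<delta> mod M = d mod M \<longrightarrow>
      (\<forall>\<tau>. Im \<tau> > 0 \<longrightarrow> slash1 w g (a,b,c,\<delta>) \<tau> = h \<tau>))"

end

theory Submission
  imports Defs "HOL-Number_Theory.Cong"
begin

text \<open>
  An element \<open>\<alpha> = (a, b; c, \<delta>)\<close> of \<open>\<Gamma>\<^sub>0(N l')\<close> embeds into \<open>\<Gamma>\<^sub>0\<^sup>(\<^sup>2\<^sup>)(N)\<close> as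
  \<open>M = (a I, b s; c s\<^sup>-\<^sup>1, \<delta> I)\<close>, where \<open>c s\<^sup>-\<^sup>1 = (c / l') adj s\<close> is integral because
  \<open>l' = det s\<close> divides \<open>c\<close>. On the line \<open>\<tau> s\<close> this \<open>M\<close> acts by
  \<open>M\<langle>\<tau> s\<rangle> = (\<alpha> \<tau>) s\<close> with automorphy factor \<open>det (c \<tau> s\<^sup>-\<^sup>1 s + \<delta> I) = (c \<tau> + \<delta>)\<^sup>2\<close>, so
  restricting to that line turns \<open>|\<^sub>k M\<close> into \<open>|\<^sub>2\<^sub>k \<alpha>\<close>. The transformation law of \<open>f\<close>
  under \<open>M\<close> then gives \<open>\<langle>\<delta>\<rangle> \<phi>\<^sub>s\<^sup>*(f) = \<chi>(\<delta>\<^sup>2) \<phi>\<^sub>s\<^sup>*(f)\<close>, and \<open>\<chi>(\<delta>\<^sup>2) = \<chi>(d\<^sup>2)\<close> as \<open>\<delta> \<equiv> d (mod N)\<close>.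
\<close>

lemma mat2_nth [simp]:
  "mat2 a b c d $ 1 $ 1 = a" "mat2 a b c d $ 1 $ 2 = b"
  "mat2 a b c d $ 2 $ 1 = c" "mat2 a b c d $ 2 $ 2 = d"
  by (simp_all add: mat2_def)

lemma mat2_eta: "A = mat2 (A$1$1) (A$1$2) (A$2$1) (A$2$2)"
  by (simp add: vec_eq_iff forall_2)

lemma vec_lambda_eq_mat2: "(\<chi> i j. f i j) = mat2 (f 1 1) (f 1 2) (f 2 1) (f 2 2)"
  by (simp add: vec_eq_iff forall_2)

lemma mat2_eq_iff: "mat2 a b c d = mat2 a' b' c' d' \<longleftrightarrow> a = a' \<and> b = b' \<and> c = c' \<and> d = d'"
  by (auto simp add: vec_eq_iff forall_2)

lemma mat_eq_mat2: "(mat x :: 'a::zero^2^2) = mat2 x 0 0 x"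
  by (simp add: vec_eq_iff forall_2 mat_def)

lemma mat2_mult:
  "mat2 a b c d ** mat2 e f g h = mat2 (a*e+b*g) (a*f+b*h) (c*e+d*g) (c*f+(d::'a::semiring_1)*h)"
  by (simp add: vec_eq_iff forall_2 matrix_matrix_mult_def sum_2)

lemma mat2_add: "mat2 a b c d + mat2 e f g h = mat2 (a+e) (b+f) (c+g) ((d::'a::plus)+h)"
  by (simp add: vec_eq_iff forall_2)

lemma mat2_diff: "mat2 a b c d - mat2 e f g h = mat2 (a-e) (b-f) (c-g) ((d::'a::minus)-h)"
  by (simp add: vec_eq_iff forall_2)

lemma transpose_mat2: "transpose (mat2 a b c d) = mat2 a c b d"
  by (simp add: vec_eq_iff forall_2 transpose_def)

lemma det_mat2: "det (mat2 a b c (d::'a::comm_ring_1)) = a*d - b*c"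
  by (simp add: det_2)

lemma cmat_mat2: "cmat (mat2 a b c d) = mat2 (of_int a) (of_int b) (of_int c) (of_int d)"
  by (simp add: vec_eq_iff forall_2 cmat_def)

lemma Im_mat_mat2: "Im_mat (mat2 a b c d) = mat2 (Im a) (Im b) (Im c) (Im d)"
  by (simp add: vec_eq_iff forall_2 Im_mat_def)

lemmas mat2_simps = mat_eq_mat2 mat2_mult mat2_add mat2_diff transpose_mat2 det_mat2
  cmat_mat2 Im_mat_mat2 mat2_eq_iff

lemma matrix_inv_unique:
  fixes A B :: "'a::semiring_1^'n^'n"
  assumes AB: "A ** B = mat 1" and BA: "B ** A = mat 1"
  shows "matrix_inv A = B"
proof -
  define X where "X = matrix_inv A"
  have X: "A ** X = mat 1 \<and> X ** A = mat 1"
    unfolding X_def matrix_inv_def by (rule someI[of _ B]) (use AB BA in blast)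
  have "X = X ** (A ** B)" by (simp add: AB matrix_mul_rid)
  also have "\<dots> = (X ** A) ** B" by (simp add: matrix_mul_assoc)
  also have "\<dots> = B" by (simp add: X matrix_mul_lid)
  finally show ?thesis by (simp add: X_def)
qed

lemma matrix_inv_mat2_scalar:
  fixes x :: "'a::field"
  assumes "x \<noteq> 0"
  shows "matrix_inv (mat2 x 0 0 x) = mat2 (inverse x) 0 0 (inverse x)"
  using assms by (intro matrix_inv_unique) (simp_all add: mat2_simps)

definition adjugate2 :: "'a::comm_ring_1^2^2 \<Rightarrow> 'a^2^2" where
  "adjugate2 A = mat2 (A$2$2) (- A$1$2) (- A$2$1) (A$1$1)"

definition sp4_embedding ::
    "int^2^2 \<Rightarrow> int \<times> int \<times> int \<times> int \<Rightarrow> (int^2^2) \<times> (int^2^2) \<times> (int^2^2) \<times> (int^2^2)" where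
  "sp4_embedding s \<alpha> = (case \<alpha> of (a, b, c, \<delta>) \<Rightarrow>
     (mat a, mat b ** s, mat (c div det s) ** adjugate2 s, mat \<delta>))"

lemma symmetric_mat2_cases:
  assumes "transpose s = s"
  obtains p q r where "s = mat2 p q q r"
  using assms mat2_eta[of s] by (metis mat2_nth(3) transpose_mat2)

lemma sp4_embedding_in_Sp4Z:
  assumes "transpose s = s" and "a * \<delta> - b * c = 1" and "det s dvd c"
  shows "sp4_embedding s (a, b, c, \<delta>) \<in> Sp4Z"
proof -
  obtain p q r where s: "s = mat2 p q q r"
    using assms(1) by (rule symmetric_mat2_cases)
  define c' where "c' = c div det s"
  have c: "c = c' * (p * r - q * q)"
    using assms(3) by (simp add: c'_def s det_mat2)
  show ?thesis
    using assms(2) unfolding sp4_embedding_def Sp4Z_def prod.case c'_def[symmetric]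
    by (simp add: c s adjugate2_def mat2_simps algebra_simps)
qed

lemma sp4_embedding_in_Gamma0_2:
  assumes "transpose s = s" and "a * \<delta> - b * c = 1" and "N * det s dvd c"
  shows "sp4_embedding s (a, b, c, \<delta>) \<in> Gamma0_2 N"
proof -
  obtain p q r where s: "s = mat2 p q q r"
    using assms(1) by (rule symmetric_mat2_cases)
  have "det s dvd c" using assms(3) by (rule dvd_mult_right)
  moreover have "N dvd c div det s" using assms(3) by (rule dvd_mult_imp_div)
  ultimately show ?thesis
    using sp4_embedding_in_Sp4Z[OF assms(1,2)]
    unfolding Gamma0_2_def sp4_embedding_def prod.case
    by (simp add: forall_2 adjugate2_def s mat_eq_mat2 mat2_mult)
qed

lemma scaled_int_matrix_in_siegel_H2:
  assumes "transpose s = s" and "pos_def_real (\<chi> i j. real_of_int (s$i$j))" and "Im \<tau> > 0"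
  shows "(\<chi> i j. \<tau> * of_int (s$i$j)) \<in> siegel_H2"
proof -
  obtain p q r where s: "s = mat2 p q q r"
    using assms(1) by (rule symmetric_mat2_cases)
  have pos: "0 < x \<bullet> (mat2 (real_of_int p) q q r *v x)" if "x \<noteq> 0" for x
    using assms(2) that unfolding pos_def_real_def by (simp add: vec_lambda_eq_mat2 s)
  have "x \<bullet> (mat2 (Im \<tau> * p) (Im \<tau> * q) (Im \<tau> * q) (Im \<tau> * r) *v x)
      = Im \<tau> * (x \<bullet> (mat2 (real_of_int p) q q r *v x))" for x
    by (simp add: inner_vec_def matrix_vector_mult_def sum_2 algebra_simps)
  with pos assms(3)
  have "0 < x \<bullet> (mat2 (Im \<tau> * p) (Im \<tau> * q) (Im \<tau> * q) (Im \<tau> * r) *v x)" if "x \<noteq> 0" for x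
    using that by simp
  then show ?thesis
    by (simp add: siegel_H2_def pos_def_real_def vec_lambda_eq_mat2 s mat2_simps)
qed

lemma slash1_phi_restr_eq_phi_restr_slash2:
  assumes "det s dvd c" and denominator: "of_int c * \<tau> + of_int \<delta> \<noteq> 0"
  shows "slash1 (2 * k) (phi_restr s F) (a, b, c, \<delta>) \<tau>
       = phi_restr s (slash2 k F (sp4_embedding s (a, b, c, \<delta>))) \<tau>"
proof -
  define w where "w = of_int c * \<tau> + of_int \<delta>"
  define c' where "c' = c div det s"
  obtain p q q' r where s: "s = mat2 p q q' r"
    using mat2_eta by blast
  have "c = c' * (p * r - q * q')"
    using assms(1) by (simp add: c'_def s det_mat2)
  then have c: "(of_int c :: complex) = of_int c' * (of_int p * of_int r - of_int q * of_int q')"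
    by simp
  have CZD: "cmat (mat c' ** adjugate2 s) ** (\<chi> i j. \<tau> * of_int (s$i$j)) + cmat (mat \<delta>)
      = mat2 w 0 0 w"
    by (simp add: w_def c s adjugate2_def vec_lambda_eq_mat2 mat2_simps algebra_simps)
  have AZB: "(cmat (mat a) ** (\<chi> i j. \<tau> * of_int (s$i$j)) + cmat (mat b ** s))
      ** mat2 (inverse w) 0 0 (inverse w)
      = (\<chi> i j. ((of_int a * \<tau> + of_int b) / w) * of_int (s$i$j))"
    by (simp add: s vec_lambda_eq_mat2 mat2_simps divide_inverse algebra_simps)
  show ?thesis
    using denominator CZD AZB
    unfolding slash1_def slash2_def sp4_embedding_def phi_restr_def prod.case
      c'_def[symmetric] w_def[symmetric]
    by (simp add: matrix_inv_mat2_scalar det_mat2 power_mult power2_eq_square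
        inverse_mult_distrib power_mult_distrib)
qed

lemma mobius_denominator_nonzero:
  assumes "Im \<tau> > 0" and "(c, \<delta>) \<noteq> (0, 0)"
  shows "of_int c * \<tau> + of_int \<delta> \<noteq> 0"
proof (cases "c = 0")
  case False
  then have "Im (of_int c * \<tau> + of_int \<delta>) \<noteq> 0" using assms(1) by simp
  then show ?thesis by (metis zero_complex.sel(2))
qed (use assms(2) in simp)

lemma dirichlet_char_add_mult:
  assumes "dirichlet_char N chi"
  shows "chi (x + N * t) = chi x"
proof -
  have periodic: "chi (y + N) = chi y" for y
    using assms by (simp add: dirichlet_char_def)
  show ?thesis
  proof (induction t arbitrary: x rule: int_induct[where k = 0])
    case (step1 i)
    then show ?case by (metis periodic add.assoc distrib_left mult.right_neutral)
  next
    case (step2 i)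
    have "chi (x + N * (i - 1)) = chi (x + N * (i - 1) + N)" by (simp only: periodic)
    also have "\<dots> = chi x" using step2 by (simp add: algebra_simps)
    finally show ?case .
  qed simp
qed

lemma dirichlet_char_cong:
  assumes "dirichlet_char N chi" and "[x = y] (mod N)"
  shows "chi x = chi y"
  using assms dirichlet_char_add_mult by (metis cong_iff_lin)

theorem lemma4p1:
  fixes N :: int and chi :: "int \<Rightarrow> complex" and k :: nat
    and f :: "complex^2^2 \<Rightarrow> complex" and s :: "int^2^2" and l' :: int and d :: int
  assumes "N \<ge> 1"
    and "dirichlet_char N chi"
    and "f \<in> siegel_cusp_forms k N chi"
    and "transpose s = s"
    and "pos_def_real (\<chi> i j. real_of_int (s$i$j))"
    and "l' = det s"
    and "coprime d (l' * N)"
  shows "diamond_eq (2 * k) (N * l') d (phi_restr s f) (\<lambda>\<tau>. chi (d^2) * phi_restr s f \<tau>)"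
  unfolding diamond_eq_def
proof (intro allI impI)
  fix a b c \<delta> \<tau>
  assume \<alpha>: "(a, b, c, \<delta>) \<in> Gamma0 (N * l') \<and> \<delta> mod (N * l') = d mod (N * l')"
    and \<tau>: "0 < Im \<tau>"
  have unimodular: "a * \<delta> - b * c = 1" and level: "N * det s dvd c"
    using \<alpha> assms(6) by (auto simp: Gamma0_def)
  have "[\<delta> = d] (mod N * l')"
    using \<alpha> by (simp add: cong_def)
  then have "[\<delta>\<^sup>2 = d\<^sup>2] (mod N)"
    by (rule cong_pow[OF cong_modulus_mult])
  then have "chi (det (mat \<delta> :: int^2^2)) = chi (d\<^sup>2)"
    using dirichlet_char_cong[OF assms(2)] by (simp add: mat_eq_mat2 det_mat2 power2_eq_square)
  then have "slash2 k f (sp4_embedding s (a, b, c, \<delta>)) (\<chi> i j. \<tau> * of_int (s$i$j))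
      = chi (d\<^sup>2) * f (\<chi> i j. \<tau> * of_int (s$i$j))"
    using assms(3) sp4_embedding_in_Gamma0_2[OF assms(4) unimodular level]
      scaled_int_matrix_in_siegel_H2[OF assms(4,5) \<tau>]
    by (auto simp: siegel_cusp_forms_def sp4_embedding_def)
  moreover have "of_int c * \<tau> + of_int \<delta> \<noteq> 0"
    using \<tau> unimodular by (intro mobius_denominator_nonzero) auto
  ultimately show "slash1 (2 * k) (phi_restr s f) (a, b, c, \<delta>) \<tau> = chi (d\<^sup>2) * phi_restr s f \<tau>"
    using slash1_phi_restr_eq_phi_restr_slash2[OF dvd_mult_right[OF level]]
    by (simp add: phi_restr_def)
qed

end
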